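(* Let $S$ be a semigroup with finite $\mathcal{R}$-height, and let $B$ be a bi-ideal of $S$ in which every element has a local right identity in $B$ (i.e. for every $b\in B$ there is $u\in B$ with $b=bu$). Then $\mathrm{H}_{\mathcal{R}}(B)=n$, where $n$ is the maximal length of a chain of $\mathcal{R}$-classes of $S$ each of which intersects $B$.
   Context: For a semigroup $S$, $S^1$ denotes $S$ with an identity adjoined if necessary. Green's preorder: $a\leq_{\mathcal{R}} b$ iff $aS^1\subseteq bS^1$; $\mathcal{R}$ is the associated equivalence. $\mathcal{R}$-classes are ordered by $R_a\leq R_b$ iff $a\leq_{\mathcal{R}} b$, and the $\mathcal{R}$-height $\mathrm{H}_{\mathcal{R}}$ is the supremum of the cardinalities of chains of $\mathcal{R}$-classes. A bi-ideal of $S$ is a non-empty subset $B$ with $BS^1B\subseteq B$; $\mathrm{H}_{\mathcal{R}}(B)$ is computed in the semigroup $B$ itself. *)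

theory Defs
  imports Main "HOL-Library.Extended_Nat"
begin

definition semigroup_on :: "'a set \<Rightarrow> ('a \<Rightarrow> 'a \<Rightarrow> 'a) \<Rightarrow> bool" where
  "semigroup_on S f \<longleftrightarrow> (\<forall>a\<in>S. \<forall>b\<in>S. f a b \<in> S) \<and>
     (\<forall>a\<in>S. \<forall>b\<in>S. \<forall>c\<in>S. f (f a b) c = f a (f b c))"

definition right_ideal1 :: "'a set \<Rightarrow> ('a \<Rightarrow> 'a \<Rightarrow> 'a) \<Rightarrow> 'a \<Rightarrow> 'a set" where
  "right_ideal1 S f a = insert a ((\<lambda>t. f a t) ` S)"

definition R_le :: "'a set \<Rightarrow> ('a \<Rightarrow> 'a \<Rightarrow> 'a) \<Rightarrow> 'a \<Rightarrow> 'a \<Rightarrow> bool" where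
  "R_le S f a b \<longleftrightarrow> right_ideal1 S f a \<subseteq> right_ideal1 S f b"

definition R_class :: "'a set \<Rightarrow> ('a \<Rightarrow> 'a \<Rightarrow> 'a) \<Rightarrow> 'a \<Rightarrow> 'a set" where
  "R_class S f a = {b \<in> S. R_le S f a b \<and> R_le S f b a}"

definition R_classes :: "'a set \<Rightarrow> ('a \<Rightarrow> 'a \<Rightarrow> 'a) \<Rightarrow> 'a set set" where
  "R_classes S f = R_class S f ` S"

definition R_class_le :: "'a set \<Rightarrow> ('a \<Rightarrow> 'a \<Rightarrow> 'a) \<Rightarrow> 'a set \<Rightarrow> 'a set \<Rightarrow> bool" where
  "R_class_le S f X Y \<longleftrightarrow> (\<exists>a\<in>S. \<exists>b\<in>S. X = R_class S f a \<and> Y = R_class S f b \<and> R_le S f a b)"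

definition R_chain :: "'a set \<Rightarrow> ('a \<Rightarrow> 'a \<Rightarrow> 'a) \<Rightarrow> 'a set set \<Rightarrow> bool" where
  "R_chain S f C \<longleftrightarrow> C \<subseteq> R_classes S f \<and>
     (\<forall>X\<in>C. \<forall>Y\<in>C. R_class_le S f X Y \<or> R_class_le S f Y X)"

(* R-height: supremum of cardinalities of chains of R-classes (infinite chains give \<infinity>,
   since they contain finite subchains of every size) *)
definition R_height :: "'a set \<Rightarrow> ('a \<Rightarrow> 'a \<Rightarrow> 'a) \<Rightarrow> enat" where
  "R_height S f = Sup {enat (card C) | C. finite C \<and> R_chain S f C}"

definition bi_ideal :: "'a set \<Rightarrow> ('a \<Rightarrow> 'a \<Rightarrow> 'a) \<Rightarrow> 'a set \<Rightarrow> bool" where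
  "bi_ideal S f B \<longleftrightarrow> B \<noteq> {} \<and> B \<subseteq> S \<and>
     (\<forall>b\<in>B. \<forall>b'\<in>B. f b b' \<in> B \<and> (\<forall>s\<in>S. f (f b s) b' \<in> B))"

end

theory Submission
  imports Defs
begin

(* Local right identities make the R-preorder of B the restriction of that of S: if a = b s
   with s in S, write a = a u and b = b v with u, v in B; then a = b ((v s) u) and v s u lies
   in B S B, which is contained in B. Hence X \<mapsto> X \<inter> B is an order isomorphism from the
   R-classes of S meeting B onto the R-classes of B, and it maps chains to chains of the same
   cardinality. *)

lemma R_le_refl: "R_le T f a a"
  unfolding R_le_def by simp

lemma R_le_trans: "R_le T f a b \<Longrightarrow> R_le T f b c \<Longrightarrow> R_le T f a c"
  unfolding R_le_def by blast

lemma R_le_iff_mem_right_ideal1: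
  assumes sg: "semigroup_on T f" and b: "b \<in> T"
  shows "R_le T f a b \<longleftrightarrow> a \<in> right_ideal1 T f b"
proof
  assume "R_le T f a b"
  then show "a \<in> right_ideal1 T f b"
    unfolding R_le_def right_ideal1_def by blast
next
  assume "a \<in> right_ideal1 T f b"
  then consider "a = b" | s where "s \<in> T" "a = f b s"
    unfolding right_ideal1_def by blast
  then show "R_le T f a b"
  proof cases
    case 1
    then show ?thesis by (simp add: R_le_refl)
  next
    case (2 s)
    have "f a t = f b (f s t)" "f s t \<in> T" if "t \<in> T" for t
      using sg b 2 that unfolding semigroup_on_def by auto
    then show ?thesis
      using 2 unfolding R_le_def right_ideal1_def by auto
  qed
qed

lemma R_class_mem: "a \<in> T \<Longrightarrow> a \<in> R_class T f a"
  unfolding R_class_def by (simp add: R_le_refl)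

lemma R_class_eq_iff:
  assumes "b \<in> T"
  shows "R_class T f a = R_class T f b \<longleftrightarrow> R_le T f a b \<and> R_le T f b a"
proof
  assume "R_class T f a = R_class T f b"
  then show "R_le T f a b \<and> R_le T f b a"
    using R_class_mem[OF assms] unfolding R_class_def by auto
next
  assume "R_le T f a b \<and> R_le T f b a"
  then show "R_class T f a = R_class T f b"
    unfolding R_class_def by (blast intro: R_le_trans)
qed

lemma R_class_eq_of_mem:
  assumes "X \<in> R_classes T f" and "a \<in> X"
  shows "R_class T f a = X"
proof -
  obtain s where s: "s \<in> T" "X = R_class T f s"
    using assms(1) unfolding R_classes_def by blast
  then have "R_le T f a s \<and> R_le T f s a"
    using assms(2) unfolding R_class_def by blast
  then show ?thesis
    using R_class_eq_iff[OF s(1)] s(2) by blast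
qed

lemma R_class_le_iff:
  assumes "a \<in> T" "b \<in> T"
  shows "R_class_le T f (R_class T f a) (R_class T f b) \<longleftrightarrow> R_le T f a b"
proof
  assume "R_class_le T f (R_class T f a) (R_class T f b)"
  then obtain a' b' where "a' \<in> T" "b' \<in> T" "R_class T f a = R_class T f a'"
      "R_class T f b = R_class T f b'" "R_le T f a' b'"
    unfolding R_class_le_def by blast
  then show "R_le T f a b"
    using R_class_eq_iff by (metis R_le_trans)
next
  assume "R_le T f a b"
  then show "R_class_le T f (R_class T f a) (R_class T f b)"
    unfolding R_class_le_def using assms by blast
qed

lemma semigroup_on_bi_ideal:
  assumes "semigroup_on S f" and "bi_ideal S f B"
  shows "semigroup_on B f"
  using assms unfolding semigroup_on_def bi_ideal_def by blast

lemma R_le_bi_ideal_iff: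
  assumes sg: "semigroup_on S f" and bi: "bi_ideal S f B"
    and local_right_id: "\<forall>b\<in>B. \<exists>u\<in>B. b = f b u"
    and a: "a \<in> B" and b: "b \<in> B"
  shows "R_le B f a b \<longleftrightarrow> R_le S f a b"
proof -
  have BS: "B \<subseteq> S"
    using bi unfolding bi_ideal_def by simp
  have assoc: "\<And>x y z. x \<in> S \<Longrightarrow> y \<in> S \<Longrightarrow> z \<in> S \<Longrightarrow> f (f x y) z = f x (f y z)"
    and closed: "\<And>x y. x \<in> S \<Longrightarrow> y \<in> S \<Longrightarrow> f x y \<in> S"
    using sg unfolding semigroup_on_def by blast+
  note B_iff = R_le_iff_mem_right_ideal1[OF semigroup_on_bi_ideal[OF sg bi] b]
  note S_iff = R_le_iff_mem_right_ideal1[OF sg subsetD[OF BS b]]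
  have "a \<in> right_ideal1 B f b" if "a = f b s" "s \<in> S" for s
  proof -
    obtain u where u: "u \<in> B" "a = f a u" using local_right_id a by blast
    obtain v where v: "v \<in> B" "b = f b v" using local_right_id b by blast
    have "a = f (f (f b v) s) u" using u v that by simp
    also have "\<dots> = f b (f (f v s) u)"
      using assoc closed BS b u(1) v(1) that(2) by (simp add: subset_iff)
    finally show ?thesis
      using bi u(1) v(1) that(2) unfolding bi_ideal_def right_ideal1_def by blast
  qed
  then have "a \<in> right_ideal1 S f b \<Longrightarrow> a \<in> right_ideal1 B f b"
    unfolding right_ideal1_def by blast
  moreover have "a \<in> right_ideal1 B f b \<Longrightarrow> a \<in> right_ideal1 S f b"
    using BS unfolding right_ideal1_def by blast
  ultimately show ?thesis
    using B_iff S_iff by blast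
qed

locale R_le_restriction =
  fixes S B :: "'a set" and f :: "'a \<Rightarrow> 'a \<Rightarrow> 'a"
  assumes subset: "B \<subseteq> S"
    and R_le_eq: "\<And>a b. a \<in> B \<Longrightarrow> b \<in> B \<Longrightarrow> R_le B f a b \<longleftrightarrow> R_le S f a b"
begin

definition classes_meeting :: "'a set set" where
  "classes_meeting = {X \<in> R_classes S f. X \<inter> B \<noteq> {}}"

lemma R_class_restrict: "a \<in> B \<Longrightarrow> R_class B f a = R_class S f a \<inter> B"
  unfolding R_class_def using R_le_eq subset by blast

lemma classes_meeting_cases:
  assumes "X \<in> classes_meeting"
  obtains a where "a \<in> B" "X = R_class S f a" "X \<inter> B = R_class B f a"
proof -
  obtain a where a: "a \<in> X" "a \<in> B"
    using assms unfolding classes_meeting_def by blast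
  then have "X = R_class S f a"
    using assms R_class_eq_of_mem[of X S f a] unfolding classes_meeting_def by simp
  then show ?thesis
    using that a(2) R_class_restrict by blast
qed

lemma bij_betw_classes_meeting: "bij_betw (\<lambda>X. X \<inter> B) classes_meeting (R_classes B f)"
proof (rule bij_betw_imageI)
  show "inj_on (\<lambda>X. X \<inter> B) classes_meeting"
  proof (rule inj_onI)
    fix X Y assume X: "X \<in> classes_meeting" and Y: "Y \<in> classes_meeting"
      and XY: "X \<inter> B = Y \<inter> B"
    obtain a where a: "a \<in> B" "X = R_class S f a" "X \<inter> B = R_class B f a"
      using X by (rule classes_meeting_cases)
    then have "a \<in> Y"
      using XY R_class_mem[OF a(1)] by blast
    then show "X = Y"
      using Y a(2) R_class_eq_of_mem[of Y S f a] unfolding classes_meeting_def by simp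
  qed
  have "R_class S f a \<in> classes_meeting" if "a \<in> B" for a
    using that subset R_class_mem[of a S f] unfolding classes_meeting_def R_classes_def by blast
  then show "(\<lambda>X. X \<inter> B) ` classes_meeting = R_classes B f"
    using R_class_restrict unfolding R_classes_def
    by (auto elim!: classes_meeting_cases)
qed

lemma R_class_le_restrict:
  assumes "X \<in> classes_meeting" "Y \<in> classes_meeting"
  shows "R_class_le B f (X \<inter> B) (Y \<inter> B) \<longleftrightarrow> R_class_le S f X Y"
proof -
  obtain a where a: "a \<in> B" "X = R_class S f a" "X \<inter> B = R_class B f a"
    using assms(1) by (rule classes_meeting_cases)
  obtain b where b: "b \<in> B" "Y = R_class S f b" "Y \<inter> B = R_class B f b"
    using assms(2) by (rule classes_meeting_cases)
  show ?thesis
    using a b subset R_class_le_iff R_le_eq by (metis subsetD)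
qed

lemma R_chain_restrict_iff:
  assumes "C \<subseteq> classes_meeting"
  shows "R_chain B f ((\<lambda>X. X \<inter> B) ` C) \<longleftrightarrow> R_chain S f C"
proof -
  have "(\<lambda>X. X \<inter> B) ` C \<subseteq> R_classes B f" "C \<subseteq> R_classes S f"
    using assms bij_betw_classes_meeting unfolding classes_meeting_def bij_betw_def by auto
  moreover have "(\<forall>X\<in>C. \<forall>Y\<in>C. R_class_le B f (X \<inter> B) (Y \<inter> B) \<or> R_class_le B f (Y \<inter> B) (X \<inter> B))
      \<longleftrightarrow> (\<forall>X\<in>C. \<forall>Y\<in>C. R_class_le S f X Y \<or> R_class_le S f Y X)"
    using assms by (auto simp: R_class_le_restrict subset_iff)
  ultimately show ?thesis
    unfolding R_chain_def by simp
qed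

lemma R_height_eq_chains_meeting:
  "R_height B f = Sup {enat (card C) | C. finite C \<and> R_chain S f C \<and> (\<forall>X\<in>C. X \<inter> B \<noteq> {})}"
proof -
  let ?r = "\<lambda>X. X \<inter> B"
  have inj: "inj_on ?r C" if "C \<subseteq> classes_meeting" for C
    using bij_betw_classes_meeting that unfolding bij_betw_def by (metis inj_on_subset)
  have "{enat (card C) | C. finite C \<and> R_chain B f C}
      = {enat (card C) | C. finite C \<and> R_chain S f C \<and> (\<forall>X\<in>C. X \<inter> B \<noteq> {})}"
  proof (intro equalityI subsetI; elim CollectE exE conjE)
    fix n C assume n: "n = enat (card C)" and C: "finite C" "R_chain B f C"
    define C' where "C' = classes_meeting \<inter> ?r -` C"
    have "C \<subseteq> ?r ` classes_meeting"
      using C(2) bij_betw_classes_meeting unfolding R_chain_def bij_betw_def by simp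
    then have C_eq: "?r ` C' = C"
      unfolding C'_def by blast
    have C': "C' \<subseteq> classes_meeting"
      unfolding C'_def by blast
    have "finite C'" "card C' = card C"
      using C(1) C_eq inj[OF C'] finite_imageD card_image by metis+
    moreover have "R_chain S f C'"
      using C(2) C_eq R_chain_restrict_iff[OF C'] by simp
    moreover have "\<forall>X\<in>C'. X \<inter> B \<noteq> {}"
      using C' unfolding classes_meeting_def by blast
    ultimately show "n \<in> {enat (card C) | C. finite C \<and> R_chain S f C \<and> (\<forall>X\<in>C. X \<inter> B \<noteq> {})}"
      using n by (intro CollectI exI[of _ C']) simp
  next
    fix n C assume n: "n = enat (card C)"
      and C: "finite C" "R_chain S f C" "\<forall>X\<in>C. X \<inter> B \<noteq> {}"
    have C': "C \<subseteq> classes_meeting"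
      using C unfolding R_chain_def classes_meeting_def by blast
    have "finite (?r ` C)" "card (?r ` C) = card C" "R_chain B f (?r ` C)"
      using C(1,2) card_image[OF inj[OF C']] R_chain_restrict_iff[OF C'] by simp_all
    then show "n \<in> {enat (card C) | C. finite C \<and> R_chain B f C}"
      using n by (intro CollectI exI[of _ "?r ` C"]) simp
  qed
  then show ?thesis
    unfolding R_height_def by simp
qed

end

theorem proposition3p5:
  fixes S B :: "'a set" and f :: "'a \<Rightarrow> 'a \<Rightarrow> 'a"
  assumes "semigroup_on S f"
    and "R_height S f \<noteq> \<infinity>"
    and "bi_ideal S f B"
    and "\<forall>b\<in>B. \<exists>u\<in>B. b = f b u"
  shows "R_height B f =
    Sup {enat (card C) | C. finite C \<and> R_chain S f C \<and> (\<forall>X\<in>C. X \<inter> B \<noteq> {})}"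
proof -
  interpret R_le_restriction S B f
  proof
    show "B \<subseteq> S"
      using assms(3) unfolding bi_ideal_def by simp
    show "\<And>a b. a \<in> B \<Longrightarrow> b \<in> B \<Longrightarrow> R_le B f a b \<longleftrightarrow> R_le S f a b"
      using R_le_bi_ideal_iff[OF assms(1,3,4)] .
  qed
  show ?thesis
    by (rule R_height_eq_chains_meeting)
qed

end
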